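(* Let $V$ be an $\mathcal{H}$-module vertex algebra and let $W$ be a $(V,\mathcal{H})$-module. Set $W^{\mathcal{H}}=\{w\in W\mid L_1^{(n)}w=0=L_{-1}^{(n)}w \text{ for all } n\ge1\}$. Then the assignment $f\mapsto f(\mathbf{1})$ is a linear isomorphism from $\mathrm{Hom}_{(V,\mathcal{H})}(V,W)$ onto $W^{\mathcal{H}}$. Furthermore, $W^{\mathcal{H}}\subset W_0$.
   Context: Throughout, $\mathbb{F}$ is an algebraically closed field of odd prime characteristic $p$; vertex algebras and modules are over $\mathbb{F}$. Every vertex algebra $V$ is a module for the bialgebra $\mathcal{B}$ with basis $\{\mathcal{D}^{(n)}\}_{n\in\mathbb{N}}$, $\mathcal{D}^{(m)}\mathcal{D}^{(n)}=\binom{m+n}{n}\mathcal{D}^{(m+n)}$, via $\mathcal{D}^{(n)}v=v_{-n-1}\mathbf{1}$. $\mathcal{H}$: let $\mathfrak{sl}_2$ over $\mathbb{C}$ have basis $L_{-1},L_0,L_1$ with $[L_1,L_{-1}]=2L_0$, $[L_0,L_{\pm1}]=\mp L_{\pm1}$; put $L_{\pm1}^{(n)}=L_{\pm1}^n/n!$, $L_0^{(n)}=\binom{-2L_0}{n}$ in $U(\mathfrak{sl}_2)$; $U(\mathfrak{sl}_2)_{\mathbb{Z}}$ is the $\mathbb{Z}$-span of the $L_{-1}^{(i)}L_0^{(j)}L_1^{(k)}$, and $\mathcal{H}=\mathbb{F}\otimes_{\mathbb{Z}}U(\mathfrak{sl}_2)_{\mathbb{Z}}$. $e^{zL_{\pm1}}=\sum_{n\ge0}z^nL_{\pm1}^{(n)}$.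 For $v$ homogeneous of degree $n$, $f(z)^{\deg}v:=f(z)^nv$, extended linearly. A $\mathbb{Z}$-graded vertex algebra: $V=\bigoplus V_n$, $\mathbf{1}\in V_0$, $u_rV_n\subset V_{m+n-r-1}$ for $u\in V_m$. A $\mathbb{Z}$-graded weight $\mathcal{H}$-module: $W=\bigoplus W_n$ with $\mathcal{H}$-action, $L_{\pm1}^{(r)}W_n\subset W_{n\mp r}$, $L_0^{(r)}|_{W_n}=\binom{-2n}{r}$. An $\mathcal{H}$-module vertex algebra: a $\mathbb{Z}$-graded vertex algebra $V$ which is a $\mathbb{Z}$-graded weight $\mathcal{H}$-module with $L_{-1}^{(n)}=\mathcal{D}^{(n)}$, such that $V_n=0$ for $n\ll0$, $L_1^{(n)}\mathbf{1}=\delta_{n,0}\mathbf{1}$, and $e^{zL_1}Y(v,z_0)e^{-zL_1}=Y\bigl(e^{z(1-zz_0)L_1}(1-zz_0)^{-2\deg}v,z_0/(1-zz_0)\bigr)$ for $v\in V$. A $(V,\mathcal{H})$-module: a $\mathbb{Z}$-graded weight $\mathcal{H}$-module $W$ which is a $\mathbb{Z}$-graded $V$-module ($v_mW_n\subset W_{k+n-m-1}$ for $v\in V_k$) satisfying $e^{zL_{-1}}Y_W(v,x)e^{-zL_{-1}}=Y_W(e^{zL_{-1}}v,x)$ and $e^{zL_1}Y_W(v,z_0)e^{-zL_1}=Y_W\bigl(e^{z(1-zz_0)L_1}(1-zz_0)^{-2\deg}v,z_0/(1-zz_0)\bigr)$. $\mathrm{Hom}_{(V,\mathcal{H})}(V,W)$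 is the space of linear maps that are both $V$-module and $\mathcal{H}$-module homomorphisms. *)

theory Defs
  imports Main "HOL-Computational_Algebra.Polynomial"
begin

definition fsum :: "('i \<Rightarrow> 'b::comm_monoid_add) \<Rightarrow> 'b" where
  "fsum f = sum f {i. f i \<noteq> 0}"

definition sgnpow :: "int \<Rightarrow> int" where
  "sgnpow l = (if even l then 1 else -1)"

definition ibinom :: "int \<Rightarrow> nat \<Rightarrow> int" where
  "ibinom l i = (\<Prod>j<i. l - int j) div fact i"

section \<open>Z-graded vector spaces (given by the projections onto the W_n)\<close>

definition graded ::
  "('a::field \<Rightarrow> 'w::ab_group_add \<Rightarrow> 'w) \<Rightarrow> (int \<Rightarrow> 'w \<Rightarrow> 'w) \<Rightarrow> bool" where
  "graded s pr \<longleftrightarrow> vector_space s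
     \<and> (\<forall>n. Vector_Spaces.linear s s (pr n))
     \<and> (\<forall>x. finite {n. pr n x \<noteq> 0})
     \<and> (\<forall>x. fsum (\<lambda>n. pr n x) = x)
     \<and> (\<forall>n m x. pr n (pr m x) = (if n = m then pr m x else 0))"

definition hcomp :: "(int \<Rightarrow> 'w \<Rightarrow> 'w) \<Rightarrow> int \<Rightarrow> 'w set" where
  "hcomp pr n = {x. pr n x = x}"

text \<open>Lm r = L_{-1}^{(r)}, Lp r = L_1^{(r)}; L_0^{(r)} acts on W_n by binom(-2n, r).\<close>

definition L0 :: "('a::field \<Rightarrow> 'w::ab_group_add \<Rightarrow> 'w) \<Rightarrow> (int \<Rightarrow> 'w \<Rightarrow> 'w) \<Rightarrow> nat \<Rightarrow> 'w \<Rightarrow> 'w" where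
  "L0 s pr r x = fsum (\<lambda>n::int. s (of_int (ibinom (- 2 * n) r)) (pr n x))"

definition weight_H_module ::
  "('a::field \<Rightarrow> 'w::ab_group_add \<Rightarrow> 'w) \<Rightarrow> (int \<Rightarrow> 'w \<Rightarrow> 'w)
    \<Rightarrow> (nat \<Rightarrow> 'w \<Rightarrow> 'w) \<Rightarrow> (nat \<Rightarrow> 'w \<Rightarrow> 'w) \<Rightarrow> bool" where
  "weight_H_module s pr Lm Lp \<longleftrightarrow> graded s pr
     \<and> (\<forall>r. Vector_Spaces.linear s s (Lm r) \<and> Vector_Spaces.linear s s (Lp r))
     \<and> (\<forall>x. Lm 0 x = x \<and> Lp 0 x = x)
     \<and> (\<forall>a b x. Lm a (Lm b x) = s (of_nat ((a + b) choose b)) (Lm (a + b) x))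
     \<and> (\<forall>a b x. Lp a (Lp b x) = s (of_nat ((a + b) choose b)) (Lp (a + b) x))
     \<and> (\<forall>n r x. x \<in> hcomp pr n \<longrightarrow>
            Lm r x \<in> hcomp pr (n + int r) \<and> Lp r x \<in> hcomp pr (n - int r))
     \<and> (\<forall>n a b x. x \<in> hcomp pr n \<longrightarrow>
            Lp a (Lm b x) =
              (\<Sum>j\<le>min a b. s (of_int ((-1) ^ j * (ibinom (- 2 * n + int a - int b) j)))
                                (Lm (b - j) (Lp (a - j) x))))"

section \<open>Vertex algebras and modules (Y(v,x) = sum_m v_m x^{-m-1}; Y v m w = v_m w)\<close>

definition truncation :: "('v \<Rightarrow> int \<Rightarrow> 'w \<Rightarrow> 'w::zero) \<Rightarrow> bool" where
  "truncation Y \<longleftrightarrow> (\<forall>u w. \<exists>N. \<forall>m\<ge>N. Y u m w = 0)"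

definition jacobi ::
  "('a::field \<Rightarrow> 'w::ab_group_add \<Rightarrow> 'w) \<Rightarrow> ('v \<Rightarrow> int \<Rightarrow> 'v \<Rightarrow> 'v) \<Rightarrow> ('v \<Rightarrow> int \<Rightarrow> 'w \<Rightarrow> 'w) \<Rightarrow> bool" where
  "jacobi s YV YW \<longleftrightarrow> (\<forall>u v w l m n.
     fsum (\<lambda>i::nat. s (of_int (ibinom m i)) (YW (YV u (l + int i) v) (m + n - int i) w))
     = fsum (\<lambda>i::nat. s (of_int ((-1) ^ i * (ibinom l i))) (YW u (m + l - int i) (YW v (n + int i) w)))
       - s (of_int (sgnpow l))
           (fsum (\<lambda>i::nat. s (of_int ((-1) ^ i * (ibinom l i))) (YW v (n + l - int i) (YW u (m + int i) w)))))"

definition va_module ::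
  "('a::field \<Rightarrow> 'v::ab_group_add \<Rightarrow> 'v) \<Rightarrow> ('v \<Rightarrow> int \<Rightarrow> 'v \<Rightarrow> 'v) \<Rightarrow> 'v
    \<Rightarrow> ('a \<Rightarrow> 'w::ab_group_add \<Rightarrow> 'w) \<Rightarrow> ('v \<Rightarrow> int \<Rightarrow> 'w \<Rightarrow> 'w) \<Rightarrow> bool" where
  "va_module sV YV vac sW YW \<longleftrightarrow> vector_space sW
     \<and> (\<forall>u m. Vector_Spaces.linear sW sW (YW u m))
     \<and> (\<forall>m w. Vector_Spaces.linear sV sW (\<lambda>u. YW u m w))
     \<and> truncation YW
     \<and> (\<forall>m w. YW vac m w = (if m = -1 then w else 0))
     \<and> jacobi sW YV YW"

definition vertex_algebra ::
  "('a::field \<Rightarrow> 'v::ab_group_add \<Rightarrow> 'v) \<Rightarrow> ('v \<Rightarrow> int \<Rightarrow> 'v \<Rightarrow> 'v) \<Rightarrow> 'v \<Rightarrow> bool" where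
  "vertex_algebra sV YV vac \<longleftrightarrow> vector_space sV
     \<and> va_module sV YV vac sV YV
     \<and> (\<forall>u m. m \<ge> 0 \<longrightarrow> YV u m vac = 0)
     \<and> (\<forall>u. YV u (-1) vac = u)"

definition Lm_conj ::
  "('a::field \<Rightarrow> 'w::ab_group_add \<Rightarrow> 'w) \<Rightarrow> ('v \<Rightarrow> int \<Rightarrow> 'w \<Rightarrow> 'w)
    \<Rightarrow> (nat \<Rightarrow> 'v \<Rightarrow> 'v) \<Rightarrow> (nat \<Rightarrow> 'w \<Rightarrow> 'w) \<Rightarrow> bool" where
  \<comment> \<open>coefficient of z^k x^{-m-1} in e^{zL_{-1}} Y_W(v,x) e^{-zL_{-1}} = Y_W(e^{zL_{-1}} v, x)\<close>
  "Lm_conj sW YW LmV LmW \<longleftrightarrow> (\<forall>v w k m.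
     (\<Sum>b\<le>k. sW (of_int ((-1) ^ b)) (LmW (k - b) (YW v m (LmW b w))))
     = YW (LmV k v) m w)"

definition Lp_conj ::
  "('a::field \<Rightarrow> 'w::ab_group_add \<Rightarrow> 'w) \<Rightarrow> (int \<Rightarrow> 'v \<Rightarrow> 'v) \<Rightarrow> ('v \<Rightarrow> int \<Rightarrow> 'w \<Rightarrow> 'w)
    \<Rightarrow> (nat \<Rightarrow> 'v \<Rightarrow> 'v) \<Rightarrow> (nat \<Rightarrow> 'w \<Rightarrow> 'w) \<Rightarrow> bool" where
  \<comment> \<open>coefficient of z^k z0^{-n-1} in
      e^{zL_1} Y(v,z0) e^{-zL_1} = Y(e^{z(1-z z0)L_1}(1-z z0)^{-2 deg} v, z0/(1-z z0)),
      for v homogeneous of degree d (the general case follows by linearity)\<close>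
  "Lp_conj sW prV YW LpV LpW \<longleftrightarrow> (\<forall>d v w k n. v \<in> hcomp prV d \<longrightarrow>
     (\<Sum>b\<le>k. sW (of_int ((-1) ^ b)) (LpW (k - b) (YW v n (LpW b w))))
     = (\<Sum>i\<le>k. sW (of_int ((-1) ^ i * (ibinom (int (k - i) - 2 * d + (n + int i) + 1) i)))
                   (YW (LpV (k - i) v) (n + int i) w)))"

definition H_module_VA ::
  "('a::field \<Rightarrow> 'v::ab_group_add \<Rightarrow> 'v) \<Rightarrow> ('v \<Rightarrow> int \<Rightarrow> 'v \<Rightarrow> 'v) \<Rightarrow> 'v
    \<Rightarrow> (int \<Rightarrow> 'v \<Rightarrow> 'v) \<Rightarrow> (nat \<Rightarrow> 'v \<Rightarrow> 'v) \<Rightarrow> (nat \<Rightarrow> 'v \<Rightarrow> 'v) \<Rightarrow> bool" where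
  "H_module_VA sV YV vac prV LmV LpV \<longleftrightarrow>
     vertex_algebra sV YV vac
     \<and> weight_H_module sV prV LmV LpV
     \<and> vac \<in> hcomp prV 0
     \<and> (\<forall>a b u v r. u \<in> hcomp prV a \<longrightarrow> v \<in> hcomp prV b \<longrightarrow> YV u r v \<in> hcomp prV (a + b - r - 1))
     \<and> (\<forall>n v. LmV n v = YV v (- int n - 1) vac)
     \<and> (\<exists>N. \<forall>n<N. hcomp prV n = {0})
     \<and> (\<forall>n. LpV n vac = (if n = 0 then vac else 0))
     \<and> Lp_conj sV prV YV LpV LpV"

definition VH_module ::
  "('a::field \<Rightarrow> 'v::ab_group_add \<Rightarrow> 'v) \<Rightarrow> ('v \<Rightarrow> int \<Rightarrow> 'v \<Rightarrow> 'v) \<Rightarrow> 'v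
    \<Rightarrow> (int \<Rightarrow> 'v \<Rightarrow> 'v) \<Rightarrow> (nat \<Rightarrow> 'v \<Rightarrow> 'v) \<Rightarrow> (nat \<Rightarrow> 'v \<Rightarrow> 'v)
    \<Rightarrow> ('a \<Rightarrow> 'w::ab_group_add \<Rightarrow> 'w) \<Rightarrow> ('v \<Rightarrow> int \<Rightarrow> 'w \<Rightarrow> 'w)
    \<Rightarrow> (int \<Rightarrow> 'w \<Rightarrow> 'w) \<Rightarrow> (nat \<Rightarrow> 'w \<Rightarrow> 'w) \<Rightarrow> (nat \<Rightarrow> 'w \<Rightarrow> 'w) \<Rightarrow> bool" where
  "VH_module sV YV vac prV LmV LpV sW YW prW LmW LpW \<longleftrightarrow>
     weight_H_module sW prW LmW LpW
     \<and> va_module sV YV vac sW YW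
     \<and> (\<forall>k n m v w. v \<in> hcomp prV k \<longrightarrow> w \<in> hcomp prW n \<longrightarrow> YW v m w \<in> hcomp prW (k + n - m - 1))
     \<and> Lm_conj sW YW LmV LmW
     \<and> Lp_conj sW prV YW LpV LpW"

definition Hom_VH ::
  "('a::field \<Rightarrow> 'v::ab_group_add \<Rightarrow> 'v) \<Rightarrow> ('v \<Rightarrow> int \<Rightarrow> 'v \<Rightarrow> 'v)
    \<Rightarrow> (int \<Rightarrow> 'v \<Rightarrow> 'v) \<Rightarrow> (nat \<Rightarrow> 'v \<Rightarrow> 'v) \<Rightarrow> (nat \<Rightarrow> 'v \<Rightarrow> 'v)
    \<Rightarrow> ('a \<Rightarrow> 'w::ab_group_add \<Rightarrow> 'w) \<Rightarrow> ('v \<Rightarrow> int \<Rightarrow> 'w \<Rightarrow> 'w)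
    \<Rightarrow> (int \<Rightarrow> 'w \<Rightarrow> 'w) \<Rightarrow> (nat \<Rightarrow> 'w \<Rightarrow> 'w) \<Rightarrow> (nat \<Rightarrow> 'w \<Rightarrow> 'w) \<Rightarrow> ('v \<Rightarrow> 'w) set" where
  "Hom_VH sV YV prV LmV LpV sW YW prW LmW LpW = {f.
     Vector_Spaces.linear sV sW f
     \<and> (\<forall>u m v. f (YV u m v) = YW u m (f v))
     \<and> (\<forall>r v. f (LmV r v) = LmW r (f v))
     \<and> (\<forall>r v. f (LpV r v) = LpW r (f v))
     \<and> (\<forall>r v. f (L0 sV prV r v) = L0 sW prW r (f v))}"

definition H_invariants :: "(nat \<Rightarrow> 'w \<Rightarrow> 'w::zero) \<Rightarrow> (nat \<Rightarrow> 'w \<Rightarrow> 'w) \<Rightarrow> 'w set" where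
  "H_invariants LmW LpW = {w. \<forall>n\<ge>1. LpW n w = 0 \<and> LmW n w = 0}"

end

theory Submission
  imports Defs
begin

(*
  A (V,H)-homomorphism f out of V is determined by f 1, since f v = f (v_{-1} 1) = v_{-1} (f 1),
  and f 1 lies in W^H because L_{1}^{(n)} 1 = L_{-1}^{(n)} 1 = 0 for n >= 1.

  Conversely let w be in W^H. The conjugation formula for L_{-1} collapses to
  (L_{-1}^{(k)} u)_m w = L_{-1}^{(k)} (u_m w). Since L_{-1}^{(q)} u = u_{-q-1} 1, the Jacobi
  identity for u, 1, w with l = -q-1 equates binom(-q-1, n) u_n w, up to sign, with
  L_{-1}^{(q)} (u_{n+q} w), which vanishes for large q. So w is vacuum-like (u_n w = 0 for n >= 0)
  as soon as binom(q+n, n) is nonzero in F for some large q; a power of the characteristic will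
  do. Once w is vacuum-like, the Jacobi identity and the conjugation formulas for L_{-1} and L_1
  say exactly that v |-> v_{-1} w is a (V,H)-homomorphism.

  Finally, for an invariant x of degree n the commutation relation gives
  0 = L_1^{(M)} L_{-1}^{(M)} x = (-1)^M binom(-2n, M) x, and unless n = 0 some M >= 1 makes the
  coefficient nonzero in F.
*)

lemma fsum_eq_sum:
  assumes "finite S" "{i. f i \<noteq> 0} \<subseteq> S"
  shows "fsum f = sum f S"
  unfolding fsum_def by (rule sum.mono_neutral_left) (use assms in auto)

lemma fsum_eq_single:
  assumes "\<And>i. i \<noteq> j \<Longrightarrow> f i = 0"
  shows "fsum f = f j"
  using fsum_eq_sum[of "{j}" f] assms by auto

lemma fsum_eq_0:
  assumes "\<And>i. f i = 0"
  shows "fsum f = 0"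
  using assms by (simp add: fsum_def)

lemma sum_atMost_eq_single:
  fixes f :: "nat \<Rightarrow> 'b::comm_monoid_add"
  assumes "j \<le> k" "\<And>i. i \<le> k \<Longrightarrow> i \<noteq> j \<Longrightarrow> f i = 0"
  shows "(\<Sum>i\<le>k. f i) = f j"
proof -
  have "(\<Sum>i\<le>k. f i) = sum f {j}"
    by (rule sum.mono_neutral_right) (use assms in auto)
  then show ?thesis by simp
qed

lemma prime_dvd_choose_prime_power:
  assumes "prime (p::nat)" "0 < k" "k < p ^ e"
  shows "p dvd (p ^ e choose k)"
proof (rule ccontr)
  assume "\<not> p dvd (p ^ e choose k)"
  then have coprime: "coprime (p ^ e) (p ^ e choose k)"
    using prime_imp_coprime[OF assms(1)] by simp
  obtain q k' where q: "p ^ e = Suc q" and k': "k = Suc k'"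
    using assms by (metis gr0_implies_Suc less_trans)
  have "(p ^ e choose k) * k = p ^ e * (q choose k')"
    using Suc_times_binomial_eq[of q k'] q k' by simp
  then have "p ^ e dvd k"
    using coprime coprime_dvd_mult_right_iff by (metis dvd_triv_left)
  then show False
    using assms by (simp add: nat_dvd_not_less)
qed

lemma not_prime_dvd_choose_prime_power_add:
  assumes "prime (p::nat)" "n < p ^ e"
  shows "\<not> p dvd ((p ^ e + n) choose n)"
proof
  let ?t = "\<lambda>k. (p ^ e choose k) * (n choose (n - k))"
  assume "p dvd ((p ^ e + n) choose n)"
  moreover have "(p ^ e + n) choose n = ?t 0 + (\<Sum>k\<in>{..n} - {0}. ?t k)"
    unfolding vandermonde[symmetric] by (rule sum.remove) auto
  moreover have "p dvd (\<Sum>k\<in>{..n} - {0}. ?t k)"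
    using assms by (intro dvd_sum dvd_mult2 prime_dvd_choose_prime_power) auto
  ultimately have "p dvd ?t 0"
    by (metis dvd_add_left_iff)
  then show False
    using assms(1) by simp
qed

lemma ex_large_choose_nonzero:
  "\<exists>q\<ge>N. (of_nat ((q + n) choose n) :: 'a::field) \<noteq> 0"
proof (cases "CHAR('a) = 0")
  case True
  then show ?thesis
    by (auto simp: of_nat_eq_0_iff_char_dvd)
next
  case False
  then have p: "prime CHAR('a)"
    by (simp add: prime_CHAR_semidom)
  define q where "q = CHAR('a) ^ (N + n)"
  have "N + n < 2 ^ (N + n)"
    by (rule less_exp)
  also have "\<dots> \<le> q"
    unfolding q_def using prime_ge_2_nat[OF p] by (rule power_mono) simp
  finally have "N \<le> q" "n < q"
    by simp_all
  then show ?thesis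
    using not_prime_dvd_choose_prime_power_add[OF p, of n "N + n"]
    by (intro exI[of _ q]) (auto simp: q_def of_nat_eq_0_iff_char_dvd add.commute)
qed

lemma ibinom_0_right [simp]: "ibinom l 0 = 1"
  by (simp add: ibinom_def)

lemma ibinom_0_left:
  assumes "0 < i"
  shows "ibinom 0 i = 0"
proof -
  have "(\<Prod>j<i. 0 - int j) = 0"
    by (rule prod_zero) (use assms in auto)
  then show ?thesis
    unfolding ibinom_def by (simp only:) simp
qed

lemma prod_consecutive_eq_fact_choose:
  "(\<Prod>j<y. int x + 1 + int j) = fact y * int ((x + y) choose y)"
proof (induction y)
  case 0
  then show ?case by simp
next
  case (Suc y)
  have "(\<Prod>j<Suc y. int x + 1 + int j) = fact y * int (Suc (x + y) * ((x + y) choose y))"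
    using Suc by (simp add: algebra_simps)
  also have "\<dots> = fact y * int ((Suc (x + y) choose Suc y) * Suc y)"
    by (simp only: Suc_times_binomial_eq)
  also have "\<dots> = fact (Suc y) * int ((x + Suc y) choose Suc y)"
    by (simp add: algebra_simps)
  finally show ?case .
qed

lemma ibinom_minus: "ibinom (- int x - 1) y = (-1) ^ y * int ((x + y) choose y)"
proof -
  have "(\<Prod>j<y. - int x - 1 - int j) = (\<Prod>j<y. (-1) * (int x + 1 + int j))"
    by (rule prod.cong) auto
  also have "\<dots> = (\<Prod>j<y. - 1) * (\<Prod>j<y. int x + 1 + int j)"
    by (rule prod.distrib)
  also have "\<dots> = (-1) ^ y * (fact y * int ((x + y) choose y))"
    by (simp add: prod_consecutive_eq_fact_choose)
  finally show ?thesis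
    unfolding ibinom_def by simp
qed

lemma ibinom_self: "ibinom (int M) M = 1"
proof -
  have "(\<Prod>j<M. int M - int j) = (\<Prod>j = 0..<M. int (M - j))"
    by (rule prod.cong) (auto simp: lessThan_atLeast0)
  also have "\<dots> = fact M"
    by (simp add: fact_prod_rev)
  finally show ?thesis
    unfolding ibinom_def by simp
qed

lemma linear_map_0: "Vector_Spaces.linear s1 s2 T \<Longrightarrow> T 0 = 0"
  by (metis Vector_Spaces.linear_def module_hom.zero)

lemma linear_map_add: "Vector_Spaces.linear s1 s2 T \<Longrightarrow> T (x + y) = T x + T y"
  by (simp add: Vector_Spaces.linear_iff)

lemma linear_map_scale: "Vector_Spaces.linear s1 s2 T \<Longrightarrow> T (s1 c x) = s2 c (T x)"
  by (simp add: Vector_Spaces.linear_iff)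

lemma linear_map_sum: "Vector_Spaces.linear s1 s2 T \<Longrightarrow> T (sum g A) = (\<Sum>a\<in>A. T (g a))"
  by (metis Vector_Spaces.linear_def module_hom.sum)

lemma graded_vector_space: "graded s pr \<Longrightarrow> vector_space s"
  unfolding graded_def by blast

lemma graded_linear_proj: "graded s pr \<Longrightarrow> Vector_Spaces.linear s s (pr n)"
  unfolding graded_def by blast

lemma graded_finite_support: "graded s pr \<Longrightarrow> finite {n. pr n x \<noteq> 0}"
  unfolding graded_def by blast

lemma graded_proj_proj: "graded s pr \<Longrightarrow> pr n (pr m x) = (if n = m then pr m x else 0)"
  unfolding graded_def by blast

lemma graded_proj_in_hcomp: "graded s pr \<Longrightarrow> pr n x \<in> hcomp pr n"
  unfolding hcomp_def using graded_proj_proj[of s pr n n x] by simp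

lemma graded_sum_proj: "graded s pr \<Longrightarrow> (\<Sum>n\<in>{n. pr n x \<noteq> 0}. pr n x) = x"
  unfolding graded_def fsum_def by blast

lemma graded_proj_linear_map:
  assumes g1: "graded s1 pr1" and g2: "graded s2 pr2" and T: "Vector_Spaces.linear s1 s2 T"
    and deg: "\<And>k y. y \<in> hcomp pr1 k \<Longrightarrow> T y \<in> hcomp pr2 (k + d)"
  shows "pr2 (n + d) (T x) = T (pr1 n x)"
proof -
  define S where "S = {k. pr1 k x \<noteq> 0}"
  have proj_T: "pr2 (n + d) (T (pr1 k x)) = (if k = n then T (pr1 k x) else 0)" for k
  proof -
    have "T (pr1 k x) \<in> hcomp pr2 (k + d)"
      by (rule deg) (rule graded_proj_in_hcomp[OF g1])
    then have "pr2 (n + d) (T (pr1 k x)) = pr2 (n + d) (pr2 (k + d) (T (pr1 k x)))"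
      unfolding hcomp_def by simp
    with \<open>T (pr1 k x) \<in> hcomp pr2 (k + d)\<close> show ?thesis
      unfolding graded_proj_proj[OF g2] hcomp_def by auto
  qed
  have "pr2 (n + d) (T x) = pr2 (n + d) (T (\<Sum>k\<in>S. pr1 k x))"
    unfolding S_def graded_sum_proj[OF g1] ..
  also have "\<dots> = (\<Sum>k\<in>S. if k = n then T (pr1 k x) else 0)"
    by (simp add: linear_map_sum[OF T] linear_map_sum[OF graded_linear_proj[OF g2]] proj_T)
  also have "\<dots> = T (pr1 n x)"
    using graded_finite_support[OF g1] by (simp add: S_def linear_map_0[OF T])
  finally show ?thesis .
qed

lemma graded_linear_eq:
  assumes g: "graded s1 pr"
    and F: "Vector_Spaces.linear s1 s2 F" and G: "Vector_Spaces.linear s1 s2 G"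
    and hom: "\<And>n y. y \<in> hcomp pr n \<Longrightarrow> F y = G y"
  shows "F x = G x"
proof -
  have "F x = F (\<Sum>n\<in>{n. pr n x \<noteq> 0}. pr n x)"
    unfolding graded_sum_proj[OF g] ..
  also have "\<dots> = G (\<Sum>n\<in>{n. pr n x \<noteq> 0}. pr n x)"
    unfolding linear_map_sum[OF F] linear_map_sum[OF G]
    using hom graded_proj_in_hcomp[OF g] by (intro sum.cong) auto
  finally show ?thesis
    unfolding graded_sum_proj[OF g] .
qed

lemma L0_eq_sum:
  assumes "finite S" "{n. pr n x \<noteq> 0} \<subseteq> S" "vector_space s"
  shows "L0 s pr r x = (\<Sum>n\<in>S. s (of_int (ibinom (- 2 * n) r)) (pr n x))"
proof -
  interpret vector_space s by fact
  show ?thesis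
    unfolding L0_def by (rule fsum_eq_sum) (use assms in auto)
qed

lemma L0_linear:
  assumes g: "graded s pr"
  shows "Vector_Spaces.linear s s (L0 s pr r)"
proof -
  interpret vector_space s by (rule graded_vector_space[OF g])
  note proj = graded_linear_proj[OF g]
  show ?thesis unfolding Vector_Spaces.linear_iff
  proof (intro conjI allI)
    fix x y
    let ?S = "{n. pr n x \<noteq> 0} \<union> {n. pr n y \<noteq> 0}"
    have "finite ?S"
      using graded_finite_support[OF g] by simp
    moreover have "{n. pr n (x + y) \<noteq> 0} \<subseteq> ?S"
      using linear_map_add[OF proj] by auto
    ultimately show "L0 s pr r (x + y) = L0 s pr r x + L0 s pr r y"
      by (simp add: L0_eq_sum[of ?S] vector_space_axioms linear_map_add[OF proj]
          scale_right_distrib sum.distrib)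
  next
    fix c x
    let ?S = "{n. pr n x \<noteq> 0}"
    have "finite ?S"
      using graded_finite_support[OF g] by simp
    moreover have "{n. pr n (s c x) \<noteq> 0} \<subseteq> ?S"
      using linear_map_scale[OF proj] by auto
    ultimately show "L0 s pr r (s c x) = s c (L0 s pr r x)"
      by (simp add: L0_eq_sum[of ?S] vector_space_axioms linear_map_scale[OF proj]
          scale_sum_right mult.commute)
  qed (unfold_locales)
qed

lemma L0_linear_map:
  assumes g1: "graded s1 pr1" and g2: "graded s2 pr2" and T: "Vector_Spaces.linear s1 s2 T"
    and deg: "\<And>k y. y \<in> hcomp pr1 k \<Longrightarrow> T y \<in> hcomp pr2 k"
  shows "T (L0 s1 pr1 r x) = L0 s2 pr2 r (T x)"
proof -
  define S where "S = {n. pr1 n x \<noteq> 0}"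
  have proj_T: "pr2 n (T x) = T (pr1 n x)" for n
    using graded_proj_linear_map[OF g1 g2 T, of 0 n x] deg by simp
  have "finite S"
    unfolding S_def by (rule graded_finite_support[OF g1])
  moreover have "{n. pr2 n (T x) \<noteq> 0} \<subseteq> S"
    using linear_map_0[OF T] by (auto simp: S_def proj_T)
  ultimately show ?thesis
    using graded_vector_space[OF g1] graded_vector_space[OF g2]
    by (simp add: L0_eq_sum[of S] S_def linear_map_sum[OF T] linear_map_scale[OF T] proj_T)
qed

lemma H_invariantsD:
  assumes "w \<in> H_invariants Lm Lp" "1 \<le> n"
  shows "Lm n w = 0" "Lp n w = 0"
  using assms unfolding H_invariants_def by auto

lemma proj_in_H_invariants:
  assumes wm: "weight_H_module s pr Lm Lp" and w: "w \<in> H_invariants Lm Lp"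
  shows "pr n w \<in> H_invariants Lm Lp"
proof -
  have g: "graded s pr"
    and Lm: "\<And>r. Vector_Spaces.linear s s (Lm r)" and Lp: "\<And>r. Vector_Spaces.linear s s (Lp r)"
    and deg: "\<And>n r y. y \<in> hcomp pr n \<Longrightarrow>
      Lm r y \<in> hcomp pr (n + int r) \<and> Lp r y \<in> hcomp pr (n - int r)"
    using wm unfolding weight_H_module_def by blast+
  have "Lm k (pr n w) = 0 \<and> Lp k (pr n w) = 0" if "1 \<le> k" for k
  proof
    have "Lm k (pr n w) = pr (n + int k) (Lm k w)"
      by (rule graded_proj_linear_map[OF g g Lm, symmetric]) (use deg in blast)
    then show "Lm k (pr n w) = 0"
      using H_invariantsD[OF w that] linear_map_0[OF graded_linear_proj[OF g]] by simp
    have "Lp k (pr n w) = pr (n + - int k) (Lp k w)"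
      by (rule graded_proj_linear_map[OF g g Lp, symmetric]) (use deg in simp)
    then show "Lp k (pr n w) = 0"
      using H_invariantsD[OF w that] linear_map_0[OF graded_linear_proj[OF g]] by simp
  qed
  then show ?thesis
    unfolding H_invariants_def by blast
qed

lemma H_invariant_binom_scale_eq_0:
  assumes wm: "weight_H_module s pr Lm Lp"
    and x: "x \<in> hcomp pr n" "x \<in> H_invariants Lm Lp" and M: "1 \<le> M"
  shows "s (of_int ((-1) ^ M * ibinom (- 2 * n) M)) x = 0"
proof -
  have g: "graded s pr"
    and Lm: "\<And>r. Vector_Spaces.linear s s (Lm r)" and Lp: "\<And>r. Vector_Spaces.linear s s (Lp r)"
    and id: "\<And>y. Lm 0 y = y" "\<And>y. Lp 0 y = y"
    and comm: "Lp M (Lm M x) =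
      (\<Sum>j\<le>min M M. s (of_int ((-1) ^ j * (ibinom (- 2 * n + int M - int M) j)))
                                (Lm (M - j) (Lp (M - j) x)))"
    using wm x(1) unfolding weight_H_module_def by blast+
  interpret vector_space s
    by (rule graded_vector_space[OF g])
  have "0 = Lp M (Lm M x)"
    using H_invariantsD[OF x(2) M] linear_map_0[OF Lp] by simp
  also have "\<dots> = (\<Sum>j\<le>M. s (of_int ((-1) ^ j * ibinom (- 2 * n) j)) (Lm (M - j) (Lp (M - j) x)))"
    using comm by simp
  also have "\<dots> = s (of_int ((-1) ^ M * ibinom (- 2 * n) M)) x"
    using H_invariantsD(2)[OF x(2)] linear_map_0[OF Lm]
    by (subst sum_atMost_eq_single[of M]) (simp_all add: id)
  finally show ?thesis ..
qed

lemma ex_ibinom_double_nonzero: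
  assumes "n \<noteq> 0"
  shows "\<exists>M\<ge>1. (of_int ((-1) ^ M * ibinom (- 2 * n) M) :: 'a::field) \<noteq> 0"
proof (cases "n < 0")
  case True
  then show ?thesis
    using ibinom_self[of "nat (- 2 * n)"] by (intro exI[of _ "nat (- 2 * n)"]) simp
next
  case False
  define x where "x = nat (2 * n - 1)"
  obtain q where q: "1 \<le> q" "(of_nat ((q + x) choose x) :: 'a) \<noteq> 0"
    using ex_large_choose_nonzero by blast
  have "- 2 * n = - int x - 1"
    using False assms by (simp add: x_def)
  then have "ibinom (- 2 * n) q = (-1) ^ q * int ((q + x) choose x)"
    using ibinom_minus[of x q] binomial_symmetric[of q "q + x"] by (simp add: add.commute)
  then show ?thesis
    using q by (intro exI[of _ q]) simp
qed

lemma H_invariants_subset_hcomp_0: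
  fixes s :: "'a::field \<Rightarrow> 'w::ab_group_add \<Rightarrow> 'w"
  assumes wm: "weight_H_module s pr Lm Lp"
  shows "H_invariants Lm Lp \<subseteq> hcomp pr 0"
proof
  fix w assume w: "w \<in> H_invariants Lm Lp"
  have g: "graded s pr"
    using wm unfolding weight_H_module_def by blast
  interpret vector_space s
    by (rule graded_vector_space[OF g])
  have "pr n w = 0" if n: "n \<noteq> 0" for n
  proof -
    obtain M where M: "1 \<le> M" "(of_int ((-1) ^ M * ibinom (- 2 * n) M) :: 'a) \<noteq> 0"
      using ex_ibinom_double_nonzero[OF n] by blast
    then show ?thesis
      using H_invariant_binom_scale_eq_0[OF wm graded_proj_in_hcomp[OF g, of n]
          proj_in_H_invariants[OF wm w] M(1)]
      by simp
  qed
  then have "fsum (\<lambda>n. pr n w) = pr 0 w"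
    by (intro fsum_eq_single)
  then show "w \<in> hcomp pr 0"
    using g unfolding graded_def hcomp_def by auto
qed

lemma jacobi_iterate:
  assumes "jacobi s YV YW" "vector_space s"
  shows "YW (YV u l v) n w =
     fsum (\<lambda>i::nat. s (of_int ((-1) ^ i * ibinom l i)) (YW u (l - int i) (YW v (n + int i) w)))
     - s (of_int (sgnpow l))
         (fsum (\<lambda>i::nat. s (of_int ((-1) ^ i * ibinom l i)) (YW v (n + l - int i) (YW u (int i) w))))"
proof -
  interpret vector_space s by fact
  have lhs: "fsum (\<lambda>i::nat. s (of_int (ibinom 0 i)) (YW (YV u (l + int i) v) (n - int i) w))
      = YW (YV u l v) n w"
    by (subst fsum_eq_single[where j = 0]) (auto simp: ibinom_0_left)
  show ?thesis
    using assms(1)[unfolded jacobi_def, rule_format,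
        where u = u and v = v and w = w and l = l and m = 0 and n = n]
    unfolding add_0 lhs .
qed

locale VH_module_pair =
  fixes sV :: "'a::field \<Rightarrow> 'v::ab_group_add \<Rightarrow> 'v" and YV :: "'v \<Rightarrow> int \<Rightarrow> 'v \<Rightarrow> 'v"
    and vac :: 'v and prV :: "int \<Rightarrow> 'v \<Rightarrow> 'v" and LmV LpV :: "nat \<Rightarrow> 'v \<Rightarrow> 'v"
    and sW :: "'a \<Rightarrow> 'w::ab_group_add \<Rightarrow> 'w" and YW :: "'v \<Rightarrow> int \<Rightarrow> 'w \<Rightarrow> 'w"
    and prW :: "int \<Rightarrow> 'w \<Rightarrow> 'w" and LmW LpW :: "nat \<Rightarrow> 'w \<Rightarrow> 'w"
  assumes H_module_V: "H_module_VA sV YV vac prV LmV LpV"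
    and VH_module_W: "VH_module sV YV vac prV LmV LpV sW YW prW LmW LpW"
begin

abbreviation Hom where "Hom \<equiv> Hom_VH sV YV prV LmV LpV sW YW prW LmW LpW"

lemma weight_W: "weight_H_module sW prW LmW LpW"
  using VH_module_W unfolding VH_module_def by blast

lemma weight_V: "weight_H_module sV prV LmV LpV"
  using H_module_V unfolding H_module_VA_def by blast

lemma graded_V: "graded sV prV"
  using weight_V unfolding weight_H_module_def by blast

lemma graded_W: "graded sW prW"
  using weight_W unfolding weight_H_module_def by blast

sublocale V: vector_space sV
  by (rule graded_vector_space[OF graded_V])

sublocale W: vector_space sW
  by (rule graded_vector_space[OF graded_W])

lemma YV_minus_one_vac: "YV v (-1) vac = v"
  using H_module_V unfolding H_module_VA_def vertex_algebra_def by blast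

lemma LmV_eq: "LmV n v = YV v (- int n - 1) vac"
  using H_module_V unfolding H_module_VA_def by blast

lemma LmV_vac: "1 \<le> n \<Longrightarrow> LmV n vac = 0"
  using H_module_V unfolding LmV_eq H_module_VA_def vertex_algebra_def va_module_def by auto

lemma LpV_vac: "1 \<le> n \<Longrightarrow> LpV n vac = 0"
  using H_module_V unfolding H_module_VA_def by auto

lemma linear_LpV: "Vector_Spaces.linear sV sV (LpV r)"
  using weight_V unfolding weight_H_module_def by blast

lemma YW_vac: "YW vac m w = (if m = -1 then w else 0)"
  using VH_module_W unfolding VH_module_def va_module_def by blast

lemma linear_YW: "Vector_Spaces.linear sW sW (YW u m)"
  using VH_module_W unfolding VH_module_def va_module_def by blast

lemma linear_YW_left: "Vector_Spaces.linear sV sW (\<lambda>u. YW u m w)"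
  using VH_module_W unfolding VH_module_def va_module_def by blast

lemma YW_truncation: "\<exists>N. \<forall>m\<ge>N. YW u m w = 0"
  using VH_module_W unfolding VH_module_def va_module_def truncation_def by blast

lemma jacobi_W: "jacobi sW YV YW"
  using VH_module_W unfolding VH_module_def va_module_def by blast

lemma YW_hcomp: "v \<in> hcomp prV k \<Longrightarrow> w \<in> hcomp prW n \<Longrightarrow> YW v m w \<in> hcomp prW (k + n - m - 1)"
  using VH_module_W unfolding VH_module_def by blast

lemma linear_LmW: "Vector_Spaces.linear sW sW (LmW r)"
  using weight_W unfolding weight_H_module_def by blast

lemma linear_LpW: "Vector_Spaces.linear sW sW (LpW r)"
  using weight_W unfolding weight_H_module_def by blast

lemma LmW_0: "LmW 0 w = w"
  using weight_W unfolding weight_H_module_def by blast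

lemma LpW_0: "LpW 0 w = w"
  using weight_W unfolding weight_H_module_def by blast

lemma H_invariant_Lm_compat:
  assumes w: "w \<in> H_invariants LmW LpW"
  shows "YW (LmV k v) m w = LmW k (YW v m w)"
proof -
  have "YW (LmV k v) m w
      = (\<Sum>b\<le>k. sW (of_int ((-1) ^ b)) (LmW (k - b) (YW v m (LmW b w))))"
    using VH_module_W unfolding VH_module_def Lm_conj_def by simp
  also have "\<dots> = LmW k (YW v m w)"
    using H_invariantsD(1)[OF w] linear_map_0[OF linear_YW] linear_map_0[OF linear_LmW]
    by (subst sum_atMost_eq_single[of 0]) (simp_all add: LmW_0)
  finally show ?thesis .
qed

lemma H_invariant_vacuum_like:
  assumes w: "w \<in> H_invariants LmW LpW" and n: "0 \<le> n"
  shows "YW u n w = 0"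
proof -
  obtain N where N: "\<And>m. N \<le> m \<Longrightarrow> YW u m w = 0"
    using YW_truncation by blast
  define n0 where "n0 = nat n"
  obtain q where q: "nat N \<le> q" and choose: "(of_nat ((q + n0) choose n0) :: 'a) \<noteq> 0"
    using ex_large_choose_nonzero by blast
  define l where "l = - int q - 1"
  define c where "c = (-1) ^ n0 * ibinom l n0"
  have "0 = LmW q (YW u (int n0 + int q) w)"
    using N[of "int n0 + int q"] q linear_map_0[OF linear_LmW] by simp
  also have "\<dots> = YW (YV u l vac) (int n0 + int q) w"
    using H_invariant_Lm_compat[OF w, of q u] by (simp add: LmV_eq l_def)
  also have "\<dots> = 0 - sW (of_int (sgnpow l)) (sW (of_int c) (YW u (int n0) w))"
  proof -
    have "fsum (\<lambda>i::nat. sW (of_int ((-1) ^ i * ibinom l i))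
        (YW u (l - int i) (YW vac (int n0 + int q + int i) w))) = 0"
      by (rule fsum_eq_0) (simp add: YW_vac linear_map_0[OF linear_YW])
    moreover have "fsum (\<lambda>i::nat. sW (of_int ((-1) ^ i * ibinom l i))
        (YW vac (int n0 + int q + l - int i) (YW u (int i) w))) = sW (of_int c) (YW u (int n0) w)"
      by (subst fsum_eq_single[where j = n0]) (auto simp: YW_vac l_def c_def)
    ultimately show ?thesis
      by (simp add: jacobi_iterate[OF jacobi_W W.vector_space_axioms])
  qed
  finally have "sW (of_int (sgnpow l * c)) (YW u (int n0) w) = 0"
    by simp
  moreover have "(of_int (sgnpow l * c) :: 'a) \<noteq> 0"
    using choose by (simp add: c_def l_def ibinom_minus sgnpow_def add.commute)
  ultimately show ?thesis
    using n by (simp add: n0_def)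
qed

lemma H_invariant_Y_compat:
  assumes w: "w \<in> H_invariants LmW LpW"
  shows "YW (YV u m v) (-1) w = YW u m (YW v (-1) w)"
proof -
  have "fsum (\<lambda>i::nat. sW (of_int ((-1) ^ i * ibinom m i))
      (YW u (m - int i) (YW v (-1 + int i) w))) = YW u m (YW v (-1) w)"
    using H_invariant_vacuum_like[OF w] linear_map_0[OF linear_YW]
    by (subst fsum_eq_single[where j = 0]) auto
  moreover have "fsum (\<lambda>i::nat. sW (of_int ((-1) ^ i * ibinom m i))
      (YW v (-1 + m - int i) (YW u (int i) w))) = 0"
    using H_invariant_vacuum_like[OF w] linear_map_0[OF linear_YW] by (intro fsum_eq_0) simp
  ultimately show ?thesis
    by (simp add: jacobi_iterate[OF jacobi_W W.vector_space_axioms])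
qed

lemma H_invariant_Lp_compat_homogeneous:
  assumes w: "w \<in> H_invariants LmW LpW" and v: "v \<in> hcomp prV d"
  shows "YW (LpV k v) (-1) w = LpW k (YW v (-1) w)"
proof -
  have "LpW k (YW v (-1) w)
      = (\<Sum>b\<le>k. sW (of_int ((-1) ^ b)) (LpW (k - b) (YW v (-1) (LpW b w))))"
    using H_invariantsD(2)[OF w] linear_map_0[OF linear_YW] linear_map_0[OF linear_LpW]
    by (subst sum_atMost_eq_single[of 0]) (simp_all add: LpW_0)
  also have "\<dots> = (\<Sum>i\<le>k.
      sW (of_int ((-1) ^ i * ibinom (int (k - i) - 2 * d + (-1 + int i) + 1) i))
         (YW (LpV (k - i) v) (-1 + int i) w))"
    using VH_module_W v unfolding VH_module_def Lp_conj_def by blast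
  also have "\<dots> = YW (LpV k v) (-1) w"
    using H_invariant_vacuum_like[OF w] by (subst sum_atMost_eq_single[of 0]) simp_all
  finally show ?thesis ..
qed

lemma H_invariant_Lp_compat:
  assumes w: "w \<in> H_invariants LmW LpW"
  shows "YW (LpV k v) (-1) w = LpW k (YW v (-1) w)"
proof (rule graded_linear_eq[OF graded_V, where F = "\<lambda>v. YW (LpV k v) (-1) w"])
  show "Vector_Spaces.linear sV sW (\<lambda>v. YW (LpV k v) (-1) w)"
    using Vector_Spaces.linear_compose[OF linear_LpV linear_YW_left] by (simp add: comp_def)
  show "Vector_Spaces.linear sV sW (\<lambda>v. LpW k (YW v (-1) w))"
    using Vector_Spaces.linear_compose[OF linear_YW_left linear_LpW] by (simp add: comp_def)
qed (rule H_invariant_Lp_compat_homogeneous[OF w])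

lemma H_invariant_L0_compat:
  assumes w: "w \<in> H_invariants LmW LpW"
  shows "YW (L0 sV prV r v) (-1) w = L0 sW prW r (YW v (-1) w)"
proof (rule L0_linear_map[OF graded_V graded_W linear_YW_left])
  have "w \<in> hcomp prW 0"
    using H_invariants_subset_hcomp_0[OF weight_W] w by blast
  then show "YW y (-1) w \<in> hcomp prW k" if "y \<in> hcomp prV k" for k y
    using YW_hcomp[OF that, of w 0 "-1"] by simp
qed

lemma YW_minus_one_in_Hom:
  assumes "w \<in> H_invariants LmW LpW"
  shows "(\<lambda>v. YW v (-1) w) \<in> Hom"
  unfolding Hom_VH_def
  by (simp add: assms linear_YW_left H_invariant_Y_compat H_invariant_Lm_compat
      H_invariant_Lp_compat H_invariant_L0_compat)

lemma Hom_apply_eq_YW_minus_one: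
  assumes "f \<in> Hom"
  shows "f v = YW v (-1) (f vac)"
proof -
  have "f (YV v (-1) vac) = YW v (-1) (f vac)"
    using assms unfolding Hom_VH_def by blast
  then show ?thesis
    by (simp only: YV_minus_one_vac)
qed

lemma Hom_vac_in_H_invariants:
  assumes "f \<in> Hom"
  shows "f vac \<in> H_invariants LmW LpW"
proof -
  have f: "Vector_Spaces.linear sV sW f"
      "\<And>r v. f (LmV r v) = LmW r (f v)" "\<And>r v. f (LpV r v) = LpW r (f v)"
    using assms unfolding Hom_VH_def by blast+
  show ?thesis
    unfolding H_invariants_def
    using f(2,3)[symmetric] LmV_vac LpV_vac linear_map_0[OF f(1)] by simp
qed

lemma bij_betw_Hom_H_invariants: "bij_betw (\<lambda>f. f vac) Hom (H_invariants LmW LpW)"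
proof (rule bij_betw_imageI)
  show "inj_on (\<lambda>f. f vac) Hom"
  proof (rule inj_onI)
    fix f g assume f: "f \<in> Hom" and g: "g \<in> Hom" and "f vac = g vac"
    show "f = g"
    proof
      fix v
      have "f v = YW v (-1) (f vac)"
        by (rule Hom_apply_eq_YW_minus_one[OF f])
      also have "\<dots> = g v"
        using \<open>f vac = g vac\<close> Hom_apply_eq_YW_minus_one[OF g, of v] by simp
      finally show "f v = g v" .
    qed
  qed
  show "(\<lambda>f. f vac) ` Hom = H_invariants LmW LpW"
  proof
    show "(\<lambda>f. f vac) ` Hom \<subseteq> H_invariants LmW LpW"
      using Hom_vac_in_H_invariants by blast
    show "H_invariants LmW LpW \<subseteq> (\<lambda>f. f vac) ` Hom"
    proof
      fix w assume "w \<in> H_invariants LmW LpW"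
      then show "w \<in> (\<lambda>f. f vac) ` Hom"
        using YW_minus_one_in_Hom
        by (intro image_eqI[where x = "\<lambda>v. YW v (-1) w"]) (simp_all add: YW_vac)
    qed
  qed
qed

lemma Hom_lin_comb:
  assumes f: "f \<in> Hom" and g: "g \<in> Hom"
  shows "(\<lambda>x. sW c (f x) + g x) \<in> Hom"
proof -
  have lin: "Vector_Spaces.linear sV sW f" "Vector_Spaces.linear sV sW g"
    using f g unfolding Hom_VH_def by blast+
  have "Vector_Spaces.linear sV sW (\<lambda>x. sW c (f x) + g x)"
    unfolding Vector_Spaces.linear_iff
    by (simp add: V.vector_space_axioms W.vector_space_axioms linear_map_add[OF lin(1)]
        linear_map_add[OF lin(2)] linear_map_scale[OF lin(1)] linear_map_scale[OF lin(2)]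
        W.scale_right_distrib algebra_simps)
  moreover have "T (sW c a + b) = sW c (T a) + T b" if "Vector_Spaces.linear sW sW T" for T a b
    using that by (simp add: linear_map_add linear_map_scale)
  ultimately show ?thesis
    using f g linear_YW linear_LmW linear_LpW L0_linear[OF graded_W] unfolding Hom_VH_def by simp
qed

lemma zero_in_Hom: "(\<lambda>x. 0) \<in> Hom"
proof -
  have "Vector_Spaces.linear sV sW (\<lambda>x. 0)"
    by (simp add: Vector_Spaces.linear_iff V.vector_space_axioms W.vector_space_axioms)
  then show ?thesis
    unfolding Hom_VH_def
    by (simp add: linear_map_0[OF linear_YW] linear_map_0[OF linear_LmW]
        linear_map_0[OF linear_LpW] linear_map_0[OF L0_linear[OF graded_W]])
qed

end

theorem proposition4p7:
  fixes p :: nat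
    and sV :: "'a::alg_closed_field \<Rightarrow> 'v::ab_group_add \<Rightarrow> 'v"
    and YV :: "'v \<Rightarrow> int \<Rightarrow> 'v \<Rightarrow> 'v" and vac :: 'v
    and prV :: "int \<Rightarrow> 'v \<Rightarrow> 'v" and LmV LpV :: "nat \<Rightarrow> 'v \<Rightarrow> 'v"
    and sW :: "'a \<Rightarrow> 'w::ab_group_add \<Rightarrow> 'w"
    and YW :: "'v \<Rightarrow> int \<Rightarrow> 'w \<Rightarrow> 'w"
    and prW :: "int \<Rightarrow> 'w \<Rightarrow> 'w" and LmW LpW :: "nat \<Rightarrow> 'w \<Rightarrow> 'w"
  assumes "prime p" and "odd p" and "CHAR('a) = p"
    and "H_module_VA sV YV vac prV LmV LpV"
    and "VH_module sV YV vac prV LmV LpV sW YW prW LmW LpW"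
  shows "(\<forall>f\<in>Hom_VH sV YV prV LmV LpV sW YW prW LmW LpW.
            \<forall>g\<in>Hom_VH sV YV prV LmV LpV sW YW prW LmW LpW. \<forall>c.
              (\<lambda>x. sW c (f x) + g x) \<in> Hom_VH sV YV prV LmV LpV sW YW prW LmW LpW)
       \<and> (\<lambda>x. 0) \<in> Hom_VH sV YV prV LmV LpV sW YW prW LmW LpW
       \<and> bij_betw (\<lambda>f. f vac) (Hom_VH sV YV prV LmV LpV sW YW prW LmW LpW) (H_invariants LmW LpW)
       \<and> H_invariants LmW LpW \<subseteq> hcomp prW 0"
proof -
  interpret VH_module_pair sV YV vac prV LmV LpV sW YW prW LmW LpW
    using assms(4,5) by unfold_locales
  show ?thesis
    using Hom_lin_comb zero_in_Hom bij_betw_Hom_H_invariants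
      H_invariants_subset_hcomp_0[OF weight_W] by blast
qed

end
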